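(* Let $K\ge2$ be a constant integer, $m=m(n)$ positive integers and $p=o(1/n)$. For $2\le k\le K$ let $p_k=p^k(1-p)^{n-k}$, $n_k=\binom nk$, $P_k=p_k/\sum_{j=2}^K p_jn_j$ and $P'_k=1-\exp(-mp_k)$. Let $M$ have binomial distribution $\mathrm{Bin}(m,\sum_{k=2}^K\binom nk p_k)$, let $X(M)=X(\overline n,\overline P,M)$ and $Y=Y(\overline n,\overline{P'})$ be as defined in the context. Then $d_{TV}(X(M),Y)=o(1)$.
   Context: Coupon collector scheme: given a constant $K\ge2$, positive integers $\overline n=(n_2,\dots,n_K)$, nonnegative reals $\overline P=(P_2,\dots,P_K)$ with $\sum_k n_kP_k\le1$, and a random variable $M$ with values in $\mathbb N$, there are coupons $c^{(k)}_i$ ($2\le k\le K$, $1\le i\le n_k$) and a blank coupon $d_0$; one performs $M$ independent draws with replacement, each draw choosing $c^{(k)}_i$ with probability $P_k$ and $d_0$ with probability $1-\sum_k n_kP_k$. Let $\mathcal I^{(k)}_i(M)=1$ if $c^{(k)}_i$ was chosen at least once and $0$ otherwise, $\mathcal I^{(k)}(M)=\sum_{i=1}^{n_k}\mathcal I^{(k)}_i(M)$, and $X(\overline n,\overline P,M)=(\mathcal I^{(2)}(M),\dots,\mathcal I^{(K)}(M))$. For $\overline{P'}=(P'_2,\dots,P'_K)$ with $P'_k\le1$, $Y(\overline n,\overline{P'})=(Y_2,\dots,Y_K)$ where the $Y_k$ are independent with $Y_k\sim\mathrm{Bin}(n_k,P'_k)$. $d_{TV}$ is total variation distance. *)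

theory Defs
  imports "HOL-Probability.Probability"
begin

(* Coupons c^(k)_i are encoded as Some (k,i); the blank coupon d_0 is None.
   nn k = n_k, PP k = P_k (only indices 2..K are used). *)

definition coupon_weight :: "nat \<Rightarrow> (nat \<Rightarrow> nat) \<Rightarrow> (nat \<Rightarrow> real) \<Rightarrow> (nat \<times> nat) option \<Rightarrow> real" where
  "coupon_weight K nn PP c = (case c of
       None \<Rightarrow> 1 - (\<Sum>k=2..K. real (nn k) * PP k)
     | Some (k,i) \<Rightarrow> (if 2 \<le> k \<and> k \<le> K \<and> 1 \<le> i \<and> i \<le> nn k then PP k else 0))"

definition coupon_draw :: "nat \<Rightarrow> (nat \<Rightarrow> nat) \<Rightarrow> (nat \<Rightarrow> real) \<Rightarrow> (nat \<times> nat) option pmf" where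
  "coupon_draw K nn PP = embed_pmf (coupon_weight K nn PP)"

fun chosen_set :: "nat \<Rightarrow> (nat \<Rightarrow> nat) \<Rightarrow> (nat \<Rightarrow> real) \<Rightarrow> nat \<Rightarrow> (nat \<times> nat) option set pmf" where
  "chosen_set K nn PP 0 = return_pmf {}"
| "chosen_set K nn PP (Suc j) =
     bind_pmf (chosen_set K nn PP j) (\<lambda>S. map_pmf (\<lambda>c. insert c S) (coupon_draw K nn PP))"

definition count_vector :: "nat \<Rightarrow> (nat \<Rightarrow> nat) \<Rightarrow> (nat \<times> nat) option set \<Rightarrow> nat list" where
  "count_vector K nn S = map (\<lambda>k. card {i. 1 \<le> i \<and> i \<le> nn k \<and> Some (k,i) \<in> S}) [2..<K+1]"

definition coupon_X :: "nat \<Rightarrow> (nat \<Rightarrow> nat) \<Rightarrow> (nat \<Rightarrow> real) \<Rightarrow> nat pmf \<Rightarrow> nat list pmf" where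
  "coupon_X K nn PP M = bind_pmf M (\<lambda>j. map_pmf (count_vector K nn) (chosen_set K nn PP j))"

fun indep_list :: "'a pmf list \<Rightarrow> 'a list pmf" where
  "indep_list [] = return_pmf []"
| "indep_list (q # qs) = bind_pmf q (\<lambda>x. map_pmf (Cons x) (indep_list qs))"

definition binom_Y :: "nat \<Rightarrow> (nat \<Rightarrow> nat) \<Rightarrow> (nat \<Rightarrow> real) \<Rightarrow> nat list pmf" where
  "binom_Y K nn PP' = indep_list (map (\<lambda>k. binomial_pmf (nn k) (PP' k)) [2..<K+1])"

definition dTV :: "'a pmf \<Rightarrow> 'a pmf \<Rightarrow> real" where
  "dTV P Q = (SUP A. \<bar>measure_pmf.prob P A - measure_pmf.prob Q A\<bar>)"

end

theory Submission
  imports Defs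
begin

(* Write q = \<Sum>k n_k p_k, so that P_k = p_k / q and M ~ Bin(m, q).  The proof shows the
   non-asymptotic bound  dTV(X(M), Y) \<le> q  and then q \<le> \<Sum>_{k=2..K} (p n)^k \<rightarrow> 0.
   The bound rests on two facts:
   (1) Poissonization: if the number of draws is Poisson(l) instead of binomial, the events
       "coupon c was drawn" are independent with probabilities 1 - exp(-l P(c)).  With
       l = m q this makes the group counts I^(k) independent Bin(n_k, 1 - exp(-m p_k)),
       i.e. the mixture over a Poisson(m q) number of draws is exactly Y.
   (2) Stein-Chen method: for every event A, |Bin(m,q)(A) - Poisson(m q)(A)| \<le> q, uniformly
       in m; mixing over the number of draws preserves this bound. *)

lemma dTV_le:
  assumes "\<And>A. \<bar>measure_pmf.prob P A - measure_pmf.prob Q A\<bar> \<le> c"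
  shows "dTV P Q \<le> c"
  unfolding dTV_def by (rule cSUP_least) (auto intro: assms)

lemma dTV_nonneg: "0 \<le> dTV P Q"
proof -
  have bdd: "bdd_above (range (\<lambda>A. \<bar>measure_pmf.prob P A - measure_pmf.prob Q A\<bar>))"
  proof (rule bdd_aboveI)
    fix x assume "x \<in> range (\<lambda>A. \<bar>measure_pmf.prob P A - measure_pmf.prob Q A\<bar>)"
    then obtain A where "x = \<bar>measure_pmf.prob P A - measure_pmf.prob Q A\<bar>" by auto
    moreover have "0 \<le> measure_pmf.prob P A" "measure_pmf.prob P A \<le> 1"
      "0 \<le> measure_pmf.prob Q A" "measure_pmf.prob Q A \<le> 1" by auto
    ultimately show "x \<le> 1" by linarith
  qed
  show ?thesis unfolding dTV_def
    by (rule cSUP_upper2[OF bdd UNIV_I]) simp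
qed

lemma prob_bind_pmf:
  "measure_pmf.prob (bind_pmf M F) A = measure_pmf.expectation M (\<lambda>x. measure_pmf.prob (F x) A)"
proof -
  have int: "integrable (measure_pmf M) (\<lambda>x. measure_pmf.prob (F x) A)"
    by (rule measure_pmf.integrable_const_bound[where B=1]) auto
  have "emeasure (measure_pmf (bind_pmf M F)) A = (\<integral>\<^sup>+x. emeasure (measure_pmf (F x)) A \<partial>M)"
    by (rule emeasure_bind_pmf)
  hence "ennreal (measure_pmf.prob (bind_pmf M F) A) = (\<integral>\<^sup>+x. ennreal (measure_pmf.prob (F x) A) \<partial>M)"
    by (simp add: measure_pmf.emeasure_eq_measure)
  also have "\<dots> = ennreal (measure_pmf.expectation M (\<lambda>x. measure_pmf.prob (F x) A))"
    by (rule nn_integral_eq_integral[OF int]) auto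
  finally show ?thesis
    by (subst (asm) ennreal_inj) (auto intro: integral_nonneg_AE)
qed

(* Poisson weights l^i e^{-l} / i!, defined for every real l (the library's poisson_pmf needs l > 0). *)
definition poisson_w :: "real \<Rightarrow> nat \<Rightarrow> real" where "poisson_w l i = l ^ i / fact i * exp (- l)"

lemma poisson_w_pos: "l > 0 \<Longrightarrow> poisson_w l i > 0"
  by (simp add: poisson_w_def)

lemma poisson_w_Suc: "poisson_w l (Suc i) = poisson_w l i * l / real (Suc i)"
  by (simp add: poisson_w_def field_simps)

lemma poisson_w_sums: "l > 0 \<Longrightarrow> (\<lambda>i. poisson_w l i) sums 1"
proof -
  have "(\<lambda>n. l^n /\<^sub>R fact n) sums exp l" by (rule exp_converges)
  hence "(\<lambda>n. (l^n /\<^sub>R fact n) * exp (-l)) sums (exp l * exp (-l))" by (rule sums_mult2)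
  thus ?thesis by (simp add: poisson_w_def divide_inverse mult_exp_exp mult.commute mult.left_commute)
qed

definition poisson_cdf :: "real \<Rightarrow> nat \<Rightarrow> real" where "poisson_cdf l j = (\<Sum>i\<le>j. poisson_w l i)"

lemma poisson_tail_sums:
  assumes "l > 0"
  shows "(\<lambda>r. poisson_w l (r + Suc j)) sums (1 - poisson_cdf l j)"
proof -
  have "(\<lambda>i. poisson_w l i) sums (1 - poisson_cdf l j + (\<Sum>i<Suc j. poisson_w l i))"
    using poisson_w_sums[OF assms] by (simp add: poisson_cdf_def lessThan_Suc_atMost)
  thus ?thesis by (subst sums_iff_shift)
qed

(* Three monotonicity facts about the Poisson law control the increments of the Stein solution.
   First: the ratios cdf(i) / w(i) increase with i. *)
lemma poisson_cdf_ratio_mono: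
  assumes "l > 0"
  shows "poisson_cdf l i * poisson_w l (Suc i) \<le> poisson_cdf l (Suc i) * poisson_w l i"
proof -
  have "poisson_cdf l i * poisson_w l (Suc i) = (\<Sum>t\<le>i. poisson_w l t * poisson_w l (Suc i))"
    by (simp add: poisson_cdf_def sum_distrib_right)
  also have "\<dots> \<le> (\<Sum>t\<le>i. poisson_w l (Suc t) * poisson_w l i)"
  proof (rule sum_mono)
    fix t assume "t \<in> {..i}"
    hence ti: "t \<le> i" by simp
    have "poisson_w l t * poisson_w l (Suc i) = poisson_w l t * poisson_w l i * (l / real (Suc i))"
      by (simp add: poisson_w_Suc)
    also have "\<dots> \<le> poisson_w l t * poisson_w l i * (l / real (Suc t))"
      using ti assms poisson_w_pos[OF assms, of t] poisson_w_pos[OF assms, of i]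
      by (intro mult_left_mono divide_left_mono) auto
    also have "\<dots> = poisson_w l (Suc t) * poisson_w l i" by (simp add: poisson_w_Suc)
    finally show "poisson_w l t * poisson_w l (Suc i) \<le> poisson_w l (Suc t) * poisson_w l i" .
  qed
  also have "\<dots> \<le> (poisson_w l 0 + (\<Sum>t\<le>i. poisson_w l (Suc t))) * poisson_w l i"
    using poisson_w_pos[OF assms, of 0] poisson_w_pos[OF assms, of i] by (simp add: sum_distrib_right[symmetric] distrib_right)
  also have "poisson_w l 0 + (\<Sum>t\<le>i. poisson_w l (Suc t)) = poisson_cdf l (Suc i)"
    unfolding poisson_cdf_def by (rule sum.atMost_Suc_shift[symmetric])
  finally show ?thesis .
qed

lemma poisson_tail_ratio_mono:
  assumes "l > 0"
  shows "(1 - poisson_cdf l (Suc i)) * poisson_w l i \<le> (1 - poisson_cdf l i) * poisson_w l (Suc i)"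
proof -
  have s1: "(\<lambda>r. poisson_w l (r + Suc (Suc i)) * poisson_w l i) sums ((1 - poisson_cdf l (Suc i)) * poisson_w l i)"
    by (rule sums_mult2[OF poisson_tail_sums[OF assms]])
  have s2: "(\<lambda>r. poisson_w l (r + Suc i) * poisson_w l (Suc i)) sums ((1 - poisson_cdf l i) * poisson_w l (Suc i))"
    by (rule sums_mult2[OF poisson_tail_sums[OF assms]])
  show ?thesis
  proof (rule sums_le[OF _ s1 s2])
    fix r
    have "poisson_w l (r + Suc (Suc i)) * poisson_w l i = poisson_w l (r + Suc i) * poisson_w l i * (l / real (Suc (r + Suc i)))"
      by (simp add: poisson_w_Suc)
    also have "\<dots> \<le> poisson_w l (r + Suc i) * poisson_w l i * (l / real (Suc i))"
      using assms poisson_w_pos[OF assms, of "r + Suc i"] poisson_w_pos[OF assms, of i]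
      by (intro mult_left_mono divide_left_mono) auto
    also have "\<dots> = poisson_w l (r + Suc i) * poisson_w l (Suc i)" by (simp add: poisson_w_Suc)
    finally show "poisson_w l (r + Suc (Suc i)) * poisson_w l i \<le> poisson_w l (r + Suc i) * poisson_w l (Suc i)" .
  qed
qed

lemma poisson_cdf_step:
  assumes "l > 0"
  shows "l * poisson_cdf l i \<le> real (Suc i) * poisson_cdf l (Suc i)"
proof -
  have "l * poisson_cdf l i = (\<Sum>t\<le>i. real (Suc t) * poisson_w l (Suc t))"
    unfolding poisson_cdf_def sum_distrib_left by (rule sum.cong) (auto simp: poisson_w_Suc)
  also have "\<dots> \<le> (\<Sum>t\<le>i. real (Suc i) * poisson_w l (Suc t))"
    using poisson_w_pos[OF assms] by (intro sum_mono mult_right_mono) (auto simp: less_imp_le)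
  also have "\<dots> \<le> real (Suc i) * (poisson_w l 0 + (\<Sum>t\<le>i. poisson_w l (Suc t)))"
    using poisson_w_pos[OF assms, of 0] by (simp add: sum_distrib_left[symmetric] distrib_left)
  also have "poisson_w l 0 + (\<Sum>t\<le>i. poisson_w l (Suc t)) = poisson_cdf l (Suc i)"
    unfolding poisson_cdf_def by (rule sum.atMost_Suc_shift[symmetric])
  finally show ?thesis .
qed

(* The solution g of the Stein equation  l g(k) - k g(k-1) = 1_B(k) - Poisson(l)(B)  for the
   Poisson law, given explicitly by g(j) = F(j) / (l w(j)) with F the partial sums below. *)
definition stein_F :: "real \<Rightarrow> nat set \<Rightarrow> nat \<Rightarrow> real" where
  "stein_F l B j = (\<Sum>i\<le>j. ((if i \<in> B then 1 else 0) - (\<Sum>a\<in>B. poisson_w l a)) * poisson_w l i)"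

definition stein_g :: "real \<Rightarrow> nat set \<Rightarrow> nat \<Rightarrow> real" where
  "stein_g l B j = stein_F l B j / (l * poisson_w l j)"

(* For a singleton event g is explicit in terms of the Poisson distribution function, and g is
   linear in B; together this reduces the study of g to singletons. *)
lemma stein_F_single:
  "stein_F l {a} j = poisson_w l a * ((if a \<le> j then 1 else 0) - poisson_cdf l j)"
  by (simp add: stein_F_def poisson_cdf_def left_diff_distrib sum_subtractf sum_distrib_left right_diff_distrib
      if_distrib[of "\<lambda>x. x * _"] cong: if_cong)

lemma stein_F_linear: "finite B \<Longrightarrow> stein_F l B j = (\<Sum>a\<in>B. stein_F l {a} j)"
proof -
  assume fB: "finite B"
  have "\<And>i. (if i \<in> B then 1 else 0) - (\<Sum>a\<in>B. poisson_w l a) = (\<Sum>a\<in>B. (if i = a then 1 else 0) - poisson_w l a)"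
    using fB by (simp add: sum_subtractf)
  hence "stein_F l B j = (\<Sum>i\<le>j. \<Sum>a\<in>B. ((if i = a then 1 else 0) - poisson_w l a) * poisson_w l i)"
    unfolding stein_F_def by (simp add: sum_distrib_right)
  also have "\<dots> = (\<Sum>a\<in>B. stein_F l {a} j)"
    by (subst sum.swap) (simp add: stein_F_def)
  finally show ?thesis .
qed

lemma stein_g_single:
  "stein_g l {a} j = (poisson_w l a / l) * (((if a \<le> j then 1 else 0) - poisson_cdf l j) / poisson_w l j)"
  by (simp add: stein_g_def stein_F_single)

lemma stein_g_increment_single:
  assumes l: "l > 0"
  shows "stein_g l {a} (Suc i) - stein_g l {a} i \<le> (if a = Suc i then 1 / l else 0)"
proof -
  have c: "poisson_w l a / l \<ge> 0" using poisson_w_pos[OF l, of a] l by simp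
  have p1: "poisson_w l i > 0" "poisson_w l (Suc i) > 0" using poisson_w_pos[OF l] by auto
  consider (lt) "a \<le> i" | (eq) "a = Suc i" | (gt) "a > Suc i" by linarith
  thus ?thesis
  proof cases
    case lt
    have "(1 - poisson_cdf l (Suc i)) / poisson_w l (Suc i) \<le> (1 - poisson_cdf l i) / poisson_w l i"
      using poisson_tail_ratio_mono[OF l, of i] p1 by (simp add: divide_le_eq le_divide_eq mult.commute)
    hence "(poisson_w l a / l) * ((1 - poisson_cdf l (Suc i)) / poisson_w l (Suc i)) \<le> (poisson_w l a / l) * ((1 - poisson_cdf l i) / poisson_w l i)"
      using c by (rule mult_left_mono)
    thus ?thesis using lt by (simp add: stein_g_single)
  next
    case gt
    have "poisson_cdf l i / poisson_w l i \<le> poisson_cdf l (Suc i) / poisson_w l (Suc i)"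
      using poisson_cdf_ratio_mono[OF l, of i] p1 by (simp add: divide_le_eq le_divide_eq mult.commute)
    hence "(poisson_w l a / l) * (poisson_cdf l i / poisson_w l i) \<le> (poisson_w l a / l) * (poisson_cdf l (Suc i) / poisson_w l (Suc i))"
      using c by (rule mult_left_mono)
    thus ?thesis using gt by (simp add: stein_g_single)
  next
    case eq
    have e1: "stein_g l {a} (Suc i) = (1 - poisson_cdf l (Suc i)) / l"
      using eq p1 l by (simp add: stein_g_single)
    have "stein_g l {a} i = (poisson_w l i * l / real (Suc i) / l) * ((0 - poisson_cdf l i) / poisson_w l i)"
      using eq by (simp add: stein_g_single poisson_w_Suc)
    also have "\<dots> = - poisson_cdf l i / real (Suc i)"
      using p1 l by (simp add: field_simps del: of_nat_Suc)
    finally have e2: "stein_g l {a} i = - poisson_cdf l i / real (Suc i)" .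
    have "poisson_cdf l i / real (Suc i) \<le> poisson_cdf l (Suc i) / l"
      using poisson_cdf_step[OF l, of i] l by (simp add: divide_le_eq le_divide_eq mult.commute del: of_nat_Suc)
    hence "(1 - poisson_cdf l (Suc i)) / l + poisson_cdf l i / real (Suc i) \<le> (1 - poisson_cdf l (Suc i)) / l + poisson_cdf l (Suc i) / l"
      by simp
    also have "\<dots> = 1 / l" by (simp add: diff_divide_distrib)
    finally have "(1 - poisson_cdf l (Suc i)) / l + poisson_cdf l i / real (Suc i) \<le> 1 / l" .
    thus ?thesis using e1 e2 eq by simp
  qed
qed

lemma stein_g_linear: "finite B \<Longrightarrow> stein_g l B j = (\<Sum>a\<in>B. stein_g l {a} j)"
  unfolding stein_g_def by (subst stein_F_linear) (simp_all add: sum_divide_distrib)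

(* Only the singleton a = i+1 can contribute a positive increment, hence the bound for all B. *)
lemma stein_g_increment:
  assumes l: "l > 0" and fB: "finite B"
  shows "stein_g l B (Suc i) - stein_g l B i \<le> 1 / l"
proof -
  have "stein_g l B (Suc i) - stein_g l B i = (\<Sum>a\<in>B. stein_g l {a} (Suc i) - stein_g l {a} i)"
    using fB by (subst (1 2) stein_g_linear) (simp_all add: sum_subtractf)
  also have "\<dots> \<le> (\<Sum>a\<in>B. if a = Suc i then 1 / l else 0)"
    by (rule sum_mono) (rule stein_g_increment_single[OF l])
  also have "\<dots> \<le> 1 / l" using fB l by (simp add: sum.delta)
  finally show ?thesis .
qed

lemma stein_equation:
  assumes l: "l > 0"
  shows "l * stein_g l B k - real k * (if k = 0 then 0 else stein_g l B (k - 1))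
         = (if k \<in> B then 1 else 0) - (\<Sum>a\<in>B. poisson_w l a)"
proof (cases k)
  case 0
  thus ?thesis using poisson_w_pos[OF l, of 0] l by (simp add: stein_g_def stein_F_def)
next
  case (Suc i)
  have p1: "poisson_w l i > 0" "poisson_w l (Suc i) > 0" using poisson_w_pos[OF l] by auto
  let ?h = "(if Suc i \<in> B then 1 else 0) - (\<Sum>a\<in>B. poisson_w l a)"
  have f: "stein_F l B (Suc i) = stein_F l B i + ?h * poisson_w l (Suc i)"
    by (simp add: stein_F_def)
  have g: "real (Suc i) * (stein_F l B i / (l * poisson_w l i)) = stein_F l B i / poisson_w l (Suc i)"
    using p1 l by (simp add: poisson_w_Suc field_simps del: of_nat_Suc)
  have "l * stein_g l B (Suc i) - real (Suc i) * stein_g l B i = stein_F l B (Suc i) / poisson_w l (Suc i) - stein_F l B i / poisson_w l (Suc i)"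
    using l g by (simp add: stein_g_def del: of_nat_Suc)
  also have "\<dots> = ?h" using p1 unfolding f by (simp add: field_simps)
  finally show ?thesis using Suc by simp
qed

(* Binomial weights and the two identities used to rewrite E[l g(W) - W g(W-1)] for W ~ Bin(m,q):
   the size-bias identity and Pascal's rule. *)
definition binom_w :: "nat \<Rightarrow> real \<Rightarrow> nat \<Rightarrow> real" where
  "binom_w n q k = real (n choose k) * q ^ k * (1 - q) ^ (n - k)"

lemma binom_w_sum: "(\<Sum>k\<le>n. binom_w n q k) = 1"
proof -
  have "(\<Sum>k\<le>n. binom_w n q k) = (q + (1 - q)) ^ n"
    by (subst binomial_ring) (simp add: binom_w_def atLeast0AtMost mult_ac)
  thus ?thesis by simp
qed

lemma binom_w_size_bias:
  "(\<Sum>k\<le>Suc n. binom_w (Suc n) q k * (real k * f (k - 1))) = real (Suc n) * q * (\<Sum>k\<le>n. binom_w n q k * f k)"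
proof -
  have "(\<Sum>k\<le>Suc n. binom_w (Suc n) q k * (real k * f (k - 1))) =
        (\<Sum>k\<le>n. binom_w (Suc n) q (Suc k) * (real (Suc k) * f k))"
    by (subst sum.atMost_Suc_shift) simp
  also have "\<dots> = (\<Sum>k\<le>n. real (Suc n) * q * (binom_w n q k * f k))"
  proof (rule sum.cong[OF refl])
    fix k assume "k \<in> {..n}"
    have "real (Suc k) * real (Suc n choose Suc k) = real (Suc n) * real (n choose k)"
      by (metis Suc_times_binomial of_nat_mult)
    thus "binom_w (Suc n) q (Suc k) * (real (Suc k) * f k) = real (Suc n) * q * (binom_w n q k * f k)"
      unfolding binom_w_def by (simp del: of_nat_Suc) (metis (no_types, lifting) mult.commute mult.left_commute)
  qed
  also have "\<dots> = real (Suc n) * q * (\<Sum>k\<le>n. binom_w n q k * f k)"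
    by (simp add: sum_distrib_left)
  finally show ?thesis .
qed

lemma binom_w_pascal:
  "(\<Sum>k\<le>Suc n. binom_w (Suc n) q k * f k) =
     (1 - q) * (\<Sum>k\<le>n. binom_w n q k * f k) + q * (\<Sum>k\<le>n. binom_w n q k * f (Suc k))"
proof -
  have split: "binom_w (Suc n) q (Suc k) = q * binom_w n q k + real (n choose Suc k) * q ^ Suc k * (1 - q) ^ (n - k)" for k
    by (simp add: binom_w_def algebra_simps)
  have "(\<Sum>k\<le>Suc n. binom_w (Suc n) q k * f k) = binom_w (Suc n) q 0 * f 0 + (\<Sum>k\<le>n. binom_w (Suc n) q (Suc k) * f (Suc k))"
    by (rule sum.atMost_Suc_shift)
  also have "(\<Sum>k\<le>n. binom_w (Suc n) q (Suc k) * f (Suc k)) =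
       q * (\<Sum>k\<le>n. binom_w n q k * f (Suc k)) + (\<Sum>k\<le>n. real (n choose Suc k) * q ^ Suc k * (1 - q) ^ (n - k) * f (Suc k))"
    unfolding split sum_distrib_left sum.distrib[symmetric] by (rule sum.cong) (simp_all add: algebra_simps)
  also have "(\<Sum>k\<le>n. real (n choose Suc k) * q ^ Suc k * (1 - q) ^ (n - k) * f (Suc k)) =
             (\<Sum>k<n. real (n choose Suc k) * q ^ Suc k * (1 - q) ^ (n - k) * f (Suc k))"
    by (simp add: lessThan_Suc_atMost[symmetric])
  also have "\<dots> = (\<Sum>k<n. (1 - q) * (binom_w n q (Suc k) * f (Suc k)))"
  proof (rule sum.cong[OF refl])
    fix k assume "k \<in> {..<n}"
    hence "n - k = Suc (n - Suc k)" by simp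
    thus "real (n choose Suc k) * q ^ Suc k * (1 - q) ^ (n - k) * f (Suc k) = (1 - q) * (binom_w n q (Suc k) * f (Suc k))"
      by (simp add: binom_w_def mult_ac)
  qed
  also have "binom_w (Suc n) q 0 * f 0 = (1 - q) * (binom_w n q 0 * f 0)"
    by (simp add: binom_w_def)
  finally have "(\<Sum>k\<le>Suc n. binom_w (Suc n) q k * f k) =
     (1 - q) * (binom_w n q 0 * f 0 + (\<Sum>k<n. binom_w n q (Suc k) * f (Suc k))) + q * (\<Sum>k\<le>n. binom_w n q k * f (Suc k))"
    by (simp add: sum_distrib_left distrib_left)
  also have "binom_w n q 0 * f 0 + (\<Sum>k<n. binom_w n q (Suc k) * f (Suc k)) = (\<Sum>k\<le>n. binom_w n q k * f k)"
    by (rule sum.atMost_shift[symmetric])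
  finally show ?thesis .
qed

lemma binom_w_nonneg: "0 \<le> q \<Longrightarrow> q \<le> 1 \<Longrightarrow> 0 \<le> binom_w n q k"
  by (simp add: binom_w_def)

(* Writing the
   indicator through the Stein equation, the difference equals l q E[g(W'+1) - g(W')] with
   W' ~ Bin(m-1,q), and the increment bound finishes the estimate. *)
lemma binomial_poisson_set_bound:
  assumes q: "0 < q" "q \<le> 1" and m: "m > 0" and fB: "finite B" and Bm: "B \<subseteq> {..m}"
  shows "(\<Sum>k\<in>B. binom_w m q k) - (\<Sum>k\<in>B. poisson_w (real m * q) k) \<le> q"
proof -
  define l where "l = real m * q"
  have l: "l > 0" using q m by (simp add: l_def)
  obtain m' where m': "m = Suc m'" using m by (cases m) auto
  define G where "G = stein_g l B"
  define pB where "pB = (\<Sum>a\<in>B. poisson_w l a)"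
  have e1: "(\<Sum>k\<le>m. binom_w m q k * ((if k \<in> B then 1 else 0) - pB)) = (\<Sum>k\<in>B. binom_w m q k) - pB"
  proof -
    have "(\<Sum>k\<le>m. binom_w m q k * ((if k \<in> B then 1 else 0) - pB)) =
          (\<Sum>k\<le>m. (if k \<in> B then binom_w m q k else 0)) - pB * (\<Sum>k\<le>m. binom_w m q k)"
      unfolding sum_distrib_left sum_subtractf[symmetric] by (rule sum.cong) (auto simp: algebra_simps)
    also have "(\<Sum>k\<le>m. (if k \<in> B then binom_w m q k else 0)) = (\<Sum>k\<in>B. binom_w m q k)"
      using Bm by (subst sum.inter_restrict[symmetric]) (auto intro: sum.cong simp: Int_absorb1)
    finally show ?thesis by (simp add: binom_w_sum)
  qed
  have e2: "(if k \<in> B then 1 else 0) - pB = l * G k - real k * G (k - 1)" for k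
    using stein_equation[OF l, of B k] unfolding G_def pB_def by (cases k) auto
  have "(\<Sum>k\<le>m. binom_w m q k * ((if k \<in> B then 1 else 0) - pB)) =
        l * (\<Sum>k\<le>m. binom_w m q k * G k) - (\<Sum>k\<le>m. binom_w m q k * (real k * G (k - 1)))"
    by (simp add: e2 right_diff_distrib sum_subtractf sum_distrib_left mult_ac)
  also have "\<dots> = l * ((1 - q) * (\<Sum>k\<le>m'. binom_w m' q k * G k) + q * (\<Sum>k\<le>m'. binom_w m' q k * G (Suc k)))
       - real m * q * (\<Sum>k\<le>m'. binom_w m' q k * G k)"
    unfolding m' by (simp only: binom_w_size_bias, simp only: binom_w_pascal)
  also have "\<dots> = l * q * (\<Sum>k\<le>m'. binom_w m' q k * (G (Suc k) - G k))"
    by (simp add: l_def algebra_simps sum_subtractf)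
  also have "\<dots> \<le> l * q * (\<Sum>k\<le>m'. binom_w m' q k * (1 / l))"
    using l q fB unfolding G_def
    by (intro mult_left_mono sum_mono stein_g_increment binom_w_nonneg) (auto intro: mult_left_mono stein_g_increment binom_w_nonneg)
  also have "\<dots> = q" using l by (simp add: sum_divide_distrib[symmetric] binom_w_sum)
  finally show ?thesis using e1 by (simp add: l_def pB_def)
qed

lemma weighted_diff_le_positive_part:
  fixes a b phi :: "'a \<Rightarrow> real"
  assumes A: "finite A" and phi: "\<And>k. 0 \<le> phi k" "\<And>k. phi k \<le> 1"
  shows "(\<Sum>k\<in>A. (a k - b k) * phi k) \<le> (\<Sum>k\<in>{k\<in>A. b k < a k}. a k - b k)"
proof -
  have "(a k - b k) * phi k \<le> (if b k < a k then a k - b k else 0)" for k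
  proof (cases "b k < a k")
    case True
    thus ?thesis using phi[of k] by (simp add: mult_left_le)
  next
    case False
    thus ?thesis using phi[of k] by (simp add: mult_nonpos_nonneg)
  qed
  hence "(\<Sum>k\<in>A. (a k - b k) * phi k) \<le> (\<Sum>k\<in>A. if b k < a k then a k - b k else 0)"
    by (rule sum_mono)
  also have "\<dots> = (\<Sum>k\<in>{k\<in>A. b k < a k}. a k - b k)"
    using A by (simp add: sum.inter_filter)
  finally show ?thesis .
qed

(* The Stein-Chen bound for expectations of [0,1]-valued functions: apply the set bound to
   the values where the binomial weight exceeds the Poisson weight. *)
lemma binomial_poisson_expectation:
  assumes q: "0 < q" "q \<le> 1" and m: "m > 0" and phi: "\<And>k. 0 \<le> phi k" "\<And>k. phi k \<le> 1"
  shows "measure_pmf.expectation (binomial_pmf m q) phi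
         - measure_pmf.expectation (poisson_pmf (real m * q)) phi \<le> q"
proof -
  define l where "l = real m * q"
  have l: "l > 0" using q m by (simp add: l_def)
  have binomial: "measure_pmf.expectation (binomial_pmf m q) phi = (\<Sum>k\<le>m. binom_w m q k * phi k)"
    using q by (subst expectation_binomial_pmf') (auto simp: binom_w_def)
  have "(\<Sum>k\<le>m. poisson_w l k * phi k) = measure_pmf.expectation (poisson_pmf l) (\<lambda>k. phi k * indicator {..m} k)"
    using l by (subst integral_measure_pmf_real[where A="{..m}"]) (auto simp: poisson_w_def indicator_def intro!: sum.cong)
  also have "\<dots> \<le> measure_pmf.expectation (poisson_pmf l) phi"
  proof (rule integral_mono)
    show "integrable (measure_pmf (poisson_pmf l)) (\<lambda>k. phi k * indicator {..m} k)"
      by (rule measure_pmf.integrable_const_bound[where B=1]) (auto simp: phi split: split_indicator)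
    show "integrable (measure_pmf (poisson_pmf l)) phi"
      by (rule measure_pmf.integrable_const_bound[where B=1]) (auto simp: phi abs_le_iff intro: order_trans[OF _ phi(2)])
  qed (auto simp: phi split: split_indicator)
  finally have poisson: "(\<Sum>k\<le>m. poisson_w l k * phi k) \<le> measure_pmf.expectation (poisson_pmf l) phi" .
  define B where "B = {k\<in>{..m}. poisson_w l k < binom_w m q k}"
  have "(\<Sum>k\<le>m. binom_w m q k * phi k) - (\<Sum>k\<le>m. poisson_w l k * phi k) \<le> (\<Sum>k\<in>B. binom_w m q k - poisson_w l k)"
    using weighted_diff_le_positive_part[of "{..m}" phi "binom_w m q" "poisson_w l"] phi
    unfolding B_def by (simp add: sum_subtractf left_diff_distrib)
  also have "\<dots> = (\<Sum>k\<in>B. binom_w m q k) - (\<Sum>k\<in>B. poisson_w (real m * q) k)"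
    by (simp add: sum_subtractf l_def)
  also have "\<dots> \<le> q"
    by (rule binomial_poisson_set_bound[OF q m]) (auto simp: B_def)
  finally show ?thesis using binomial poisson by (simp add: l_def)
qed

lemma binomial_poisson_mixture:
  assumes q: "0 < q" "q \<le> 1" and m: "m > 0"
  shows "\<bar>measure_pmf.prob (bind_pmf (binomial_pmf m q) F) A
         - measure_pmf.prob (bind_pmf (poisson_pmf (real m * q)) F) A\<bar> \<le> q"
proof -
  let ?phi = "\<lambda>x. measure_pmf.prob (F x) A"
  have i: "integrable (measure_pmf M) ?phi" for M
    by (rule measure_pmf.integrable_const_bound[where B=1]) auto
  have a: "measure_pmf.expectation (binomial_pmf m q) ?phi - measure_pmf.expectation (poisson_pmf (real m * q)) ?phi \<le> q"
    by (rule binomial_poisson_expectation[OF q m]) auto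
  have b: "measure_pmf.expectation (binomial_pmf m q) (\<lambda>x. 1 - ?phi x) - measure_pmf.expectation (poisson_pmf (real m * q)) (\<lambda>x. 1 - ?phi x) \<le> q"
    by (rule binomial_poisson_expectation[OF q m]) (auto simp: measure_pmf.prob_le_1)
  have "measure_pmf.expectation M (\<lambda>x. 1 - ?phi x) = 1 - measure_pmf.expectation M ?phi" for M
    using i[of M] by (subst Bochner_Integration.integral_diff) (auto simp: measure_pmf.prob_space)
  thus ?thesis using a b by (simp add: prob_bind_pmf abs_le_iff)
qed

definition coupon_set :: "nat \<Rightarrow> (nat \<Rightarrow> nat) \<Rightarrow> (nat \<times> nat) option set" where
  "coupon_set K nn = Some ` (SIGMA k:{2..K}. {1..nn k})"

lemma finite_coupon_set: "finite (coupon_set K nn)"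
  by (simp add: coupon_set_def)

lemma mem_coupon_set: "Some (k,i) \<in> coupon_set K nn \<longleftrightarrow> 2 \<le> k \<and> k \<le> K \<and> 1 \<le> i \<and> i \<le> nn k"
  by (auto simp: coupon_set_def)

lemma None_notin_coupon_set: "None \<notin> coupon_set K nn"
  by (auto simp: coupon_set_def)

lemma weight_sum_coupon_set: "(\<Sum>c\<in>coupon_set K nn. coupon_weight K nn PP c) = (\<Sum>k=2..K. real (nn k) * PP k)"
proof -
  have "(\<Sum>c\<in>coupon_set K nn. coupon_weight K nn PP c) = (\<Sum>x\<in>(SIGMA k:{2..K}. {1..nn k}). coupon_weight K nn PP (Some x))"
    unfolding coupon_set_def by (subst sum.reindex) (auto simp: inj_on_def)
  also have "\<dots> = (\<Sum>(k,i)\<in>(SIGMA k:{2..K}. {1..nn k}). PP k)"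
    by (rule sum.cong) (auto simp: coupon_weight_def)
  also have "\<dots> = (\<Sum>k=2..K. \<Sum>i=1..nn k. PP k)"
    by (rule sum.Sigma[symmetric]) auto
  also have "\<dots> = (\<Sum>k=2..K. real (nn k) * PP k)" by simp
  finally show ?thesis .
qed

(* A coupon scheme whose probabilities sum to 1 (no blank coupon): the setting after
   conditioning on non-blank draws. *)
locale coupon_scheme =
  fixes K :: nat and nn :: "nat \<Rightarrow> nat" and PP :: "nat \<Rightarrow> real"
  assumes PP_nonneg: "\<And>k. 0 \<le> PP k" and PP_sum: "(\<Sum>k=2..K. real (nn k) * PP k) = 1"
begin

abbreviation "D \<equiv> coupon_draw K nn PP"

lemma pmf_D: "pmf D c = coupon_weight K nn PP c"
  unfolding coupon_draw_def
proof (rule pmf_embed_pmf)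
  show "0 \<le> coupon_weight K nn PP x" for x
    using PP_nonneg PP_sum by (auto simp: coupon_weight_def split: option.splits)
  have "(\<integral>\<^sup>+x. ennreal (coupon_weight K nn PP x) \<partial>count_space UNIV) = (\<Sum>x\<in>insert None (coupon_set K nn). ennreal (coupon_weight K nn PP x))"
    by (rule nn_integral_count_space') (auto simp: finite_coupon_set coupon_weight_def mem_coupon_set split: option.splits)
  also have "\<dots> = ennreal (\<Sum>x\<in>insert None (coupon_set K nn). coupon_weight K nn PP x)"
    using PP_nonneg PP_sum by (intro sum_ennreal) (auto simp: coupon_weight_def split: option.splits)
  also have "(\<Sum>x\<in>insert None (coupon_set K nn). coupon_weight K nn PP x) = 1"
    using PP_sum by (simp add: finite_coupon_set None_notin_coupon_set weight_sum_coupon_set) (simp add: coupon_weight_def)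
  finally show "(\<integral>\<^sup>+x. ennreal (coupon_weight K nn PP x) \<partial>count_space UNIV) = 1" by simp
qed

lemma set_D: "set_pmf D \<subseteq> coupon_set K nn"
proof
  fix c assume "c \<in> set_pmf D"
  hence "coupon_weight K nn PP c \<noteq> 0" by (simp add: set_pmf_iff pmf_D)
  thus "c \<in> coupon_set K nn" using PP_sum
    by (auto simp: coupon_weight_def mem_coupon_set split: option.splits if_splits)
qed

lemma pmf_D_sum: "(\<Sum>c\<in>coupon_set K nn. pmf D c) = 1"
proof -
  have "(\<Sum>c\<in>coupon_set K nn. pmf D c) = measure_pmf.prob D (coupon_set K nn)"
    by (simp add: measure_measure_pmf_finite finite_coupon_set)
  also have "\<dots> = 1"
    using set_D by (subst measure_pmf.prob_eq_1) (auto simp: AE_measure_pmf_iff)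
  finally show ?thesis .
qed

lemma set_chosen_set: "set_pmf (chosen_set K nn PP j) \<subseteq> Pow (coupon_set K nn)"
  by (induction j) (use set_D in auto)

lemma chosen_set_within: "measure_pmf.prob (chosen_set K nn PP j) (Pow T) = (measure_pmf.prob D T) ^ j"
proof (induction j)
  case 0 thus ?case by simp
next
  case (Suc j)
  have pre: "(\<lambda>c. insert c S) -` Pow T = (if S \<subseteq> T then T else {})" for S
    by auto
  have pre2: "measure_pmf.prob (map_pmf (\<lambda>c. insert c S) D) (Pow T) = measure_pmf.prob D T * indicator (Pow T) S" for S
    by (simp add: pre indicator_def)
  have "measure_pmf.prob (chosen_set K nn PP (Suc j)) (Pow T) =
        measure_pmf.expectation (chosen_set K nn PP j) (\<lambda>S. measure_pmf.prob D T * indicator (Pow T) S)"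
    by (simp only: chosen_set.simps prob_bind_pmf pre2)
  also have "\<dots> = measure_pmf.prob D T * measure_pmf.expectation (chosen_set K nn PP j) (indicator (Pow T))"
    by (rule integral_mult_right_zero)
  also have "\<dots> = measure_pmf.prob D T * measure_pmf.prob (chosen_set K nn PP j) (Pow T)"
    by simp
  finally show ?case using Suc by simp
qed

end

lemma expectation_nat_sums:
  fixes M :: "nat pmf"
  assumes g: "\<And>j. 0 \<le> g j" "\<And>j. g j \<le> 1" and s: "(\<lambda>j. pmf M j * g j) sums s"
  shows "measure_pmf.expectation M g = s"
proof -
  have int: "integrable (measure_pmf M) g"
    by (rule measure_pmf.integrable_const_bound[where B=1]) (auto simp: g abs_le_iff intro: order_trans[OF _ g(2)])
  have "ennreal (measure_pmf.expectation M g) = (\<integral>\<^sup>+x. ennreal (g x) \<partial>M)"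
    by (rule nn_integral_eq_integral[OF int, symmetric]) (auto simp: g)
  also have "\<dots> = (\<integral>\<^sup>+x. ennreal (pmf M x) * ennreal (g x) \<partial>count_space UNIV)"
    by (rule nn_integral_measure_pmf)
  also have "\<dots> = (\<Sum>x. ennreal (pmf M x * g x))"
    by (subst nn_integral_count_space_nat) (simp add: ennreal_mult g)
  also have "\<dots> = ennreal s"
    using s g by (subst suminf_ennreal2) (auto simp: sums_iff)
  finally show ?thesis
    using s g by (subst (asm) ennreal_inj) (auto intro!: sums_le[OF _ sums_zero s])
qed

fun indep_set :: "('a \<Rightarrow> real) \<Rightarrow> 'a list \<Rightarrow> 'a set pmf" where
  "indep_set r [] = return_pmf {}"
| "indep_set r (c # cs) = bind_pmf (bernoulli_pmf (r c)) (\<lambda>b. map_pmf (\<lambda>S. if b then insert c S else S) (indep_set r cs))"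

lemma set_indep_set: "set_pmf (indep_set r cs) \<subseteq> Pow (set cs)"
  by (induction cs) auto

lemma indep_set_within:
  assumes "\<And>c. c \<in> set cs \<Longrightarrow> 0 \<le> r c \<and> r c \<le> 1" and "distinct cs"
  shows "measure_pmf.prob (indep_set r cs) (Pow T) = (\<Prod>c\<in>set cs - T. 1 - r c)"
  using assms
proof (induction cs)
  case Nil thus ?case by simp
next
  case (Cons c cs)
  have r: "0 \<le> r c" "r c \<le> 1" using Cons.prems by auto
  have IH: "measure_pmf.prob (indep_set r cs) (Pow T) = (\<Prod>c\<in>set cs - T. 1 - r c)"
    using Cons by auto
  have pre: "(\<lambda>S. insert c S) -` Pow T = (if c \<in> T then Pow T else {})" by auto
  have "measure_pmf.prob (indep_set r (c # cs)) (Pow T) =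
        (if c \<in> T then measure_pmf.prob (indep_set r cs) (Pow T) else 0) * r c
        + measure_pmf.prob (indep_set r cs) (Pow T) * (1 - r c)"
    using r by (simp add: prob_bind_pmf pre)
  also have "\<dots> = (\<Prod>c\<in>set (c # cs) - T. 1 - r c)"
  proof (cases "c \<in> T")
    case True
    hence "set (c # cs) - T = set cs - T" by auto
    thus ?thesis using True IH by (simp add: algebra_simps)
  next
    case False
    hence "set (c # cs) - T = insert c (set cs - T)" by auto
    moreover have "c \<notin> set cs - T" using Cons.prems by auto
    ultimately show ?thesis using False IH by simp
  qed
  finally show ?case .
qed

(* A random subset of a finite set C is determined by the probabilities of the events
   "contained in T", T \<subseteq> C (by Moebius inversion, here an induction on card). *)
lemma random_set_eqI:
  fixes P Q :: "'a set pmf"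
  assumes C: "finite C" and sP: "set_pmf P \<subseteq> Pow C" and sQ: "set_pmf Q \<subseteq> Pow C"
    and eq: "\<And>T. T \<subseteq> C \<Longrightarrow> measure_pmf.prob P (Pow T) = measure_pmf.prob Q (Pow T)"
  shows "P = Q"
proof (rule pmf_eqI)
  fix S
  show "pmf P S = pmf Q S"
  proof (cases "S \<subseteq> C")
    case False
    hence "S \<notin> set_pmf P" "S \<notin> set_pmf Q" using sP sQ by auto
    thus ?thesis by (simp add: set_pmf_iff)
  next
    case True
    thus ?thesis
    proof (induction "card S" arbitrary: S rule: less_induct)
      case less
      have fS: "finite S" using less.prems C by (rule finite_subset)
      have IH: "pmf P S' = pmf Q S'" if "S' \<in> Pow S - {S}" for S'
      proof -
        have "S' \<subset> S" using that by auto
        hence "card S' < card S" using fS by (simp add: psubset_card_mono)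
        thus ?thesis using less.hyps[of S'] that less.prems by auto
      qed
      have dec: "measure_pmf.prob M (Pow S) = pmf M S + (\<Sum>S'\<in>Pow S - {S}. pmf M S')" for M :: "'a set pmf"
        using fS by (simp add: measure_measure_pmf_finite sum.remove[of "Pow S" S])
      have "pmf P S + (\<Sum>S'\<in>Pow S - {S}. pmf P S') = pmf Q S + (\<Sum>S'\<in>Pow S - {S}. pmf Q S')"
        using eq[OF less.prems] by (simp add: dec)
      moreover have "(\<Sum>S'\<in>Pow S - {S}. pmf P S') = (\<Sum>S'\<in>Pow S - {S}. pmf Q S')"
        using IH by (rule sum.cong[OF refl])
      ultimately show ?case by simp
    qed
  qed
qed

lemma indep_set_append:
  "indep_set r (xs @ ys) = bind_pmf (indep_set r xs) (\<lambda>A. map_pmf (\<lambda>B. A \<union> B) (indep_set r ys))"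
proof (induction xs)
  case Nil
  have e: "((\<union>) {}) = (id :: 'a set \<Rightarrow> 'a set)" by auto
  show ?case by (simp add: bind_return_pmf e)
next
  case (Cons c xs)
  show ?case
    by (auto simp: Cons bind_assoc_pmf map_bind_pmf bind_map_pmf map_pmf_comp intro!: bind_pmf_cong map_pmf_cong)
qed

lemma indep_set_card_binomial:
  assumes "distinct xs" and R: "0 \<le> R" "R \<le> 1" and r: "\<And>c. c \<in> set xs \<Longrightarrow> r c = R"
  shows "map_pmf card (indep_set r xs) = binomial_pmf (length xs) R"
  using assms(1) r
proof (induction xs)
  case Nil
  thus ?case using R by (simp add: binomial_pmf_0)
next
  case (Cons c cs)
  have card_insert: "card (if b then insert c S else S) = (if b then 1 else 0) + card S"
    if "S \<in> set_pmf (indep_set r cs)" for S b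
  proof -
    have "S \<subseteq> set cs" using that set_indep_set by blast
    hence "finite S" "c \<notin> S" using Cons.prems finite_subset by auto
    thus ?thesis by simp
  qed
  have "map_pmf card (indep_set r (c # cs))
        = bind_pmf (bernoulli_pmf R) (\<lambda>b. map_pmf (\<lambda>S. (if b then 1 else 0) + card S) (indep_set r cs))"
    using Cons.prems by (auto simp: map_bind_pmf map_pmf_comp card_insert intro!: bind_pmf_cong map_pmf_cong)
  also have "\<dots> = bind_pmf (bernoulli_pmf R) (\<lambda>b. bind_pmf (binomial_pmf (length cs) R) (\<lambda>k. return_pmf ((if b then 1 else 0) + k)))"
    using Cons by (simp add: map_pmf_def[symmetric] map_pmf_comp[symmetric] comp_def)
  also have "\<dots> = binomial_pmf (length (c # cs)) R" using R by (simp add: binomial_pmf_Suc)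
  finally show ?case .
qed

definition coupon_group :: "(nat \<Rightarrow> nat) \<Rightarrow> nat \<Rightarrow> (nat \<times> nat) option list" where
  "coupon_group nn k = map (\<lambda>i. Some (k,i)) [1..<Suc (nn k)]"

lemma set_coupon_group: "set (coupon_group nn k) = {Some (k,i) | i. 1 \<le> i \<and> i \<le> nn k}"
  by (auto simp: coupon_group_def)

lemma length_coupon_group: "length (coupon_group nn k) = nn k"
  by (simp add: coupon_group_def)

lemma distinct_coupon_group: "distinct (coupon_group nn k)"
  by (simp add: coupon_group_def distinct_map inj_on_def)

lemma count_coupon_group:
  assumes "A \<subseteq> set (coupon_group nn k)"
  shows "card {i. 1 \<le> i \<and> i \<le> nn k \<and> Some (k,i) \<in> A} = card A"
proof -
  have "A = (\<lambda>i. Some (k,i)) ` {i. 1 \<le> i \<and> i \<le> nn k \<and> Some (k,i) \<in> A}"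
    using assms by (auto simp: set_coupon_group)
  thus ?thesis by (metis (no_types, lifting) card_image inj_onI option.inject prod.inject)
qed

lemma group_counts_union:
  assumes A: "A \<subseteq> set (coupon_group nn k)" and B: "B \<subseteq> set (concat (map (coupon_group nn) ks))"
    and k: "k \<notin> set ks"
  shows "card {i. 1 \<le> i \<and> i \<le> nn k \<and> Some (k,i) \<in> A \<union> B} = card {i. 1 \<le> i \<and> i \<le> nn k \<and> Some (k,i) \<in> A}"
    and "map (\<lambda>k'. card {i. 1 \<le> i \<and> i \<le> nn k' \<and> Some (k',i) \<in> A \<union> B}) ks
         = map (\<lambda>k'. card {i. 1 \<le> i \<and> i \<le> nn k' \<and> Some (k',i) \<in> B}) ks"
proof -
  have "Some (k,i) \<notin> B" for i using B k by (auto simp: set_coupon_group)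
  thus "card {i. 1 \<le> i \<and> i \<le> nn k \<and> Some (k,i) \<in> A \<union> B} = card {i. 1 \<le> i \<and> i \<le> nn k \<and> Some (k,i) \<in> A}"
    by auto
  have "Some (k',i) \<notin> A" if "k' \<in> set ks" for k' i using A k that by (auto simp: set_coupon_group)
  thus "map (\<lambda>k'. card {i. 1 \<le> i \<and> i \<le> nn k' \<and> Some (k',i) \<in> A \<union> B}) ks
        = map (\<lambda>k'. card {i. 1 \<le> i \<and> i \<le> nn k' \<and> Some (k',i) \<in> B}) ks"
    by auto
qed

(* Distinct groups are disjoint, so in an independent random set their counts are independent,
   and binomial if membership probabilities are constant on each group. *)
lemma group_counts_indep:
  assumes "distinct ks" and R: "\<And>k. k \<in> set ks \<Longrightarrow> 0 \<le> R k \<and> R k \<le> 1"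
    and rr: "\<And>k i. k \<in> set ks \<Longrightarrow> 1 \<le> i \<Longrightarrow> i \<le> nn k \<Longrightarrow> r (Some (k,i)) = R k"
  shows "map_pmf (\<lambda>S. map (\<lambda>k. card {i. 1 \<le> i \<and> i \<le> nn k \<and> Some (k,i) \<in> S}) ks)
           (indep_set r (concat (map (coupon_group nn) ks)))
         = indep_list (map (\<lambda>k. binomial_pmf (nn k) (R k)) ks)"
  using assms
proof (induction ks)
  case Nil
  show ?case by simp
next
  case (Cons k ks)
  let ?cnt = "\<lambda>k S. card {i. 1 \<le> i \<and> i \<le> nn k \<and> Some (k,i) \<in> S}"
  let ?rest = "concat (map (coupon_group nn) ks)"
  let ?G = "\<lambda>S. map (\<lambda>k. ?cnt k S) ks"
  have IH: "map_pmf ?G (indep_set r ?rest) = indep_list (map (\<lambda>k. binomial_pmf (nn k) (R k)) ks)"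
    using Cons by auto
  have "map_pmf (?cnt k) (indep_set r (coupon_group nn k)) = map_pmf card (indep_set r (coupon_group nn k))"
    using set_indep_set by (intro map_pmf_cong count_coupon_group) blast+
  also have "\<dots> = binomial_pmf (nn k) (R k)"
    using Cons.prems
    by (subst indep_set_card_binomial[OF distinct_coupon_group, where R = "R k"])
       (auto simp: length_coupon_group set_coupon_group)
  finally have group_k_binomial: "map_pmf (?cnt k) (indep_set r (coupon_group nn k)) = binomial_pmf (nn k) (R k)" .
  have counts_split: "?cnt k (A \<union> B) # ?G (A \<union> B) = ?cnt k A # ?G B"
    if A: "A \<in> set_pmf (indep_set r (coupon_group nn k))" and B: "B \<in> set_pmf (indep_set r ?rest)" for A B
  proof -
    have "A \<subseteq> set (coupon_group nn k)" "B \<subseteq> set ?rest"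
      using A B set_indep_set by blast+
    moreover have "k \<notin> set ks" using Cons.prems by simp
    ultimately show ?thesis using group_counts_union by simp
  qed
  have "map_pmf (\<lambda>S. ?cnt k S # ?G S) (indep_set r (concat (map (coupon_group nn) (k # ks))))
        = bind_pmf (indep_set r (coupon_group nn k)) (\<lambda>A. map_pmf (\<lambda>B. ?cnt k (A \<union> B) # ?G (A \<union> B)) (indep_set r ?rest))"
    by (simp add: indep_set_append map_bind_pmf map_pmf_comp)
  also have "\<dots> = bind_pmf (indep_set r (coupon_group nn k)) (\<lambda>A. map_pmf (\<lambda>B. ?cnt k A # ?G B) (indep_set r ?rest))"
    by (rule bind_pmf_cong[OF refl], rule map_pmf_cong[OF refl], rule counts_split)
  also have "\<dots> = bind_pmf (map_pmf (?cnt k) (indep_set r (coupon_group nn k))) (\<lambda>x. map_pmf (Cons x) (map_pmf ?G (indep_set r ?rest)))"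
    by (simp add: bind_map_pmf map_pmf_comp)
  also have "\<dots> = indep_list (map (\<lambda>k. binomial_pmf (nn k) (R k)) (k # ks))"
    by (simp only: group_k_binomial IH) simp
  finally show ?case by simp
qed

lemma distinct_coupon_groups: "distinct ks \<Longrightarrow> distinct (concat (map (coupon_group nn) ks))"
  by (induction ks) (auto simp: distinct_coupon_group set_coupon_group)

lemma set_coupon_groups: "set (concat (map (coupon_group nn) [2..<Suc K])) = coupon_set K nn"
proof (intro equalityI subsetI)
  fix x assume "x \<in> set (concat (map (coupon_group nn) [2..<Suc K]))"
  hence "\<exists>k \<in> set [2..<Suc K]. x \<in> set (coupon_group nn k)" by (simp only: set_concat set_map) blast
  then obtain k where k0: "k \<in> set [2..<Suc K]" "x \<in> set (coupon_group nn k)" by blast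
  hence k: "k \<in> {2..K}" "x \<in> set (coupon_group nn k)" by auto
  then obtain i where "x = Some (k,i)" "1 \<le> i" "i \<le> nn k" by (auto simp: set_coupon_group)
  thus "x \<in> coupon_set K nn" using k by (simp add: mem_coupon_set)
next
  fix x assume "x \<in> coupon_set K nn"
  then obtain k i where x: "x = Some (k,i)" "k \<in> {2..K}" "i \<in> {1..nn k}" by (auto simp: coupon_set_def)
  hence "x \<in> set (coupon_group nn k)" by (auto simp: set_coupon_group)
  moreover have "k \<in> set [2..<Suc K]" using x by auto
  ultimately show "x \<in> set (concat (map (coupon_group nn) [2..<Suc K]))" by (simp only: set_concat set_map) blast
qed

context coupon_scheme begin

(* Poissonization: with a Poisson(l) number of draws the chosen set lies in T with
   probability exp(-l D(complement of T)), which is exactly the corresponding probability for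
   independent memberships with probabilities 1 - exp(-l D(c)). *)
lemma poissonized_within:
  assumes l: "l > 0" and T: "T \<subseteq> coupon_set K nn"
  shows "measure_pmf.prob (bind_pmf (poisson_pmf l) (chosen_set K nn PP)) (Pow T)
         = exp (- l * (1 - measure_pmf.prob D T))"
proof -
  define d where "d = measure_pmf.prob D T"
  have d: "0 \<le> d" "d \<le> 1" by (auto simp: d_def)
  have "(\<lambda>n. (l * d)^n /\<^sub>R fact n) sums exp (l * d)" by (rule exp_converges)
  hence "(\<lambda>n. ((l * d)^n /\<^sub>R fact n) * exp (-l)) sums (exp (l * d) * exp (-l))" by (rule sums_mult2)
  hence s: "(\<lambda>j. pmf (poisson_pmf l) j * d ^ j) sums exp (- l * (1 - d))"
    using l by (simp add: power_mult_distrib divide_inverse mult_exp_exp algebra_simps)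
  have "measure_pmf.prob (bind_pmf (poisson_pmf l) (chosen_set K nn PP)) (Pow T)
        = measure_pmf.expectation (poisson_pmf l) (\<lambda>j. d ^ j)"
    by (simp add: prob_bind_pmf chosen_set_within d_def)
  also have "\<dots> = exp (- l * (1 - d))"
    by (rule expectation_nat_sums[OF _ _ s]) (auto simp: d power_le_one)
  finally show ?thesis by (simp add: d_def)
qed

lemma poissonization:
  assumes l: "l > 0" and L: "distinct L" "set L = coupon_set K nn"
  shows "bind_pmf (poisson_pmf l) (chosen_set K nn PP) = indep_set (\<lambda>c. 1 - exp (- l * pmf D c)) L"
proof (rule random_set_eqI[OF finite_coupon_set])
  show "set_pmf (bind_pmf (poisson_pmf l) (chosen_set K nn PP)) \<subseteq> Pow (coupon_set K nn)"
    using set_chosen_set by auto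
  show "set_pmf (indep_set (\<lambda>c. 1 - exp (- l * pmf D c)) L) \<subseteq> Pow (coupon_set K nn)"
    using set_indep_set[of _ L] L by auto
  fix T assume T: "T \<subseteq> coupon_set K nn"
  have r: "0 \<le> 1 - exp (- l * pmf D c) \<and> 1 - exp (- l * pmf D c) \<le> 1" for c
    using l by (auto simp: mult_nonneg_nonneg)
  have "measure_pmf.prob (indep_set (\<lambda>c. 1 - exp (- l * pmf D c)) L) (Pow T) = (\<Prod>c\<in>coupon_set K nn - T. exp (- l * pmf D c))"
    using L l by (subst indep_set_within) (auto simp: r)
  also have "\<dots> = exp (\<Sum>c\<in>coupon_set K nn - T. - l * pmf D c)"
    by (simp add: exp_sum finite_coupon_set)
  also have "(\<Sum>c\<in>coupon_set K nn - T. - l * pmf D c) = - l * (1 - measure_pmf.prob D T)"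
  proof -
    have "(\<Sum>c\<in>coupon_set K nn - T. pmf D c) = (\<Sum>c\<in>coupon_set K nn. pmf D c) - (\<Sum>c\<in>T. pmf D c)"
      using T by (simp add: sum_diff finite_coupon_set)
    also have "\<dots> = 1 - measure_pmf.prob D T"
      using T finite_subset[OF T finite_coupon_set] by (simp add: pmf_D_sum measure_measure_pmf_finite)
    finally show ?thesis by (simp add: sum_negf sum_distrib_left[symmetric])
  qed
  finally show "measure_pmf.prob (bind_pmf (poisson_pmf l) (chosen_set K nn PP)) (Pow T) =
        measure_pmf.prob (indep_set (\<lambda>c. 1 - exp (- l * pmf D c)) L) (Pow T)"
    using poissonized_within[OF l T] by simp
qed

lemma poissonized_counts:
  assumes l: "l > 0"
  shows "bind_pmf (poisson_pmf l) (\<lambda>j. map_pmf (count_vector K nn) (chosen_set K nn PP j))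
         = binom_Y K nn (\<lambda>k. 1 - exp (- l * PP k))"
proof -
  define L where "L = concat (map (coupon_group nn) [2..<Suc K])"
  have split: "bind_pmf (poisson_pmf l) (chosen_set K nn PP) = indep_set (\<lambda>c. 1 - exp (- l * pmf D c)) L"
    unfolding L_def by (rule poissonization[OF l distinct_coupon_groups set_coupon_groups]) simp
  have "bind_pmf (poisson_pmf l) (\<lambda>j. map_pmf (count_vector K nn) (chosen_set K nn PP j))
        = map_pmf (count_vector K nn) (bind_pmf (poisson_pmf l) (chosen_set K nn PP))"
    by (simp add: map_bind_pmf)
  also have "\<dots> = map_pmf (count_vector K nn) (indep_set (\<lambda>c. 1 - exp (- l * pmf D c)) L)"
    by (simp only: split)
  also have "\<dots> = binom_Y K nn (\<lambda>k. 1 - exp (- l * PP k))"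
    unfolding binom_Y_def count_vector_def L_def Suc_eq_plus1[symmetric]
  proof (rule group_counts_indep)
    fix k i assume "k \<in> set [2..<Suc K]" "1 \<le> i" "i \<le> nn k"
    thus "1 - exp (- l * pmf D (Some (k,i))) = 1 - exp (- l * PP k)"
      by (auto simp: pmf_D coupon_weight_def)
  qed (use l PP_nonneg in \<open>auto simp: mult_nonneg_nonneg\<close>)
  finally show ?thesis .
qed

lemma binomial_draws_dTV:
  assumes q: "0 < q" "q \<le> 1" and m: "m > 0"
  shows "dTV (coupon_X K nn PP (binomial_pmf m q)) (binom_Y K nn (\<lambda>k. 1 - exp (- (real m * q) * PP k))) \<le> q"
proof -
  have "binom_Y K nn (\<lambda>k. 1 - exp (- (real m * q) * PP k))
        = bind_pmf (poisson_pmf (real m * q)) (\<lambda>j. map_pmf (count_vector K nn) (chosen_set K nn PP j))"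
    using q m by (intro poissonized_counts[symmetric]) simp
  thus ?thesis
    unfolding coupon_X_def by (simp only:) (rule dTV_le, rule binomial_poisson_mixture[OF q m])
qed

end

lemma binomial_pmf_p0: "binomial_pmf n 0 = return_pmf 0"
  by (rule pmf_eqI) (auto simp: indicator_def)

lemma indep_list_return_zero:
  "(\<And>q. q \<in> set qs \<Longrightarrow> q = return_pmf 0) \<Longrightarrow> indep_list qs = return_pmf (map (\<lambda>_. 0) qs)"
proof (induction qs)
  case (Cons a qs)
  hence "a = return_pmf 0" "indep_list qs = return_pmf (map (\<lambda>_. 0) qs)" by auto
  thus ?case by (simp add: bind_return_pmf)
qed simp

lemma degenerate_scheme:
  assumes pk0: "\<And>k. 0 \<le> pk k" and zero: "\<And>k. k \<in> {2..K} \<Longrightarrow> real (nn k) * pk k = 0"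
  shows "coupon_X K nn PP (binomial_pmf m 0) = binom_Y K nn (\<lambda>k. 1 - exp (- real m * pk k))"
proof -
  have Y_k: "binomial_pmf (nn k) (1 - exp (- real m * pk k)) = return_pmf 0" if "k \<in> {2..K}" for k
  proof (cases "nn k = 0")
    case True
    thus ?thesis using pk0[of k] by (simp add: binomial_pmf_0 mult_nonneg_nonneg)
  next
    case False
    hence "pk k = 0" using zero[OF that] by simp
    thus ?thesis by (simp add: binomial_pmf_p0)
  qed
  have "binom_Y K nn (\<lambda>k. 1 - exp (- real m * pk k))
        = return_pmf (map (\<lambda>_. 0) (map (\<lambda>k. binomial_pmf (nn k) (1 - exp (- real m * pk k))) [2..<K+1]))"
    unfolding binom_Y_def
  proof (rule indep_list_return_zero)
    fix r assume "r \<in> set (map (\<lambda>k. binomial_pmf (nn k) (1 - exp (- real m * pk k))) [2..<K+1])"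
    then obtain k where k: "k \<in> set [2..<K+1]" and r: "r = binomial_pmf (nn k) (1 - exp (- real m * pk k))"
      unfolding set_map by blast
    show "r = return_pmf 0" unfolding r using k by (intro Y_k) auto
  qed
  thus ?thesis
    by (simp add: coupon_X_def binomial_pmf_p0 bind_return_pmf count_vector_def comp_def)
qed

lemma binomial_terms_sum_le_1:
  fixes p :: real assumes p: "0 \<le> p" "p \<le> 1" and A: "finite A"
  shows "(\<Sum>k\<in>A. real (n choose k) * (p ^ k * (1 - p) ^ (n - k))) \<le> 1"
proof -
  have "(\<Sum>k\<in>A. real (n choose k) * (p ^ k * (1 - p) ^ (n - k))) = (\<Sum>k\<in>A \<inter> {..n}. binom_w n p k)"
    using A by (intro sum.mono_neutral_cong_right) (auto simp: binom_w_def binomial_eq_0)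
  also have "\<dots> \<le> (\<Sum>k\<le>n. binom_w n p k)"
    using p by (intro sum_mono2 binom_w_nonneg) auto
  finally show ?thesis by (simp add: binom_w_sum)
qed

lemma coupon_binomial_dTV_bound:
  fixes K m n :: nat and p :: real
  assumes m: "m > 0" and p: "0 \<le> p" "p \<le> 1"
  defines "pk \<equiv> (\<lambda>k. p ^ k * (1 - p) ^ (n - k))"
  defines "nk \<equiv> (\<lambda>k. n choose k)"
  defines "q \<equiv> (\<Sum>k=2..K. real (nk k) * pk k)"
  shows "dTV (coupon_X K nk (\<lambda>k. pk k / (\<Sum>j=2..K. pk j * real (nk j))) (binomial_pmf m q))
             (binom_Y K nk (\<lambda>k. 1 - exp (- real m * pk k))) \<le> q"
proof -
  have pk0: "0 \<le> pk k" for k using p by (simp add: pk_def)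
  have q0: "0 \<le> q" unfolding q_def using pk0 by (intro sum_nonneg) auto
  have q1: "q \<le> 1" unfolding q_def pk_def nk_def by (rule binomial_terms_sum_le_1[OF p]) simp
  have q_alt: "(\<Sum>j=2..K. pk j * real (nk j)) = q" unfolding q_def by (simp add: mult.commute)
  show ?thesis
  proof (cases "q = 0")
    case True
    have zero: "\<And>k. k \<in> {2..K} \<Longrightarrow> real (nk k) * pk k = 0"
      using True pk0 unfolding q_def by (subst (asm) sum_nonneg_eq_0_iff) auto
    have "coupon_X K nk (\<lambda>k. pk k / q) (binomial_pmf m 0) = binom_Y K nk (\<lambda>k. 1 - exp (- real m * pk k))"
      by (rule degenerate_scheme[OF pk0 zero])
    thus ?thesis using True by (simp add: q_alt) (rule dTV_le, simp)
  next
    case False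
    hence q_pos: "q > 0" using q0 by simp
    interpret coupon_scheme K nk "\<lambda>k. pk k / q"
    proof
      show "0 \<le> pk k / q" for k using pk0 q0 by simp
      show "(\<Sum>k=2..K. real (nk k) * (pk k / q)) = 1"
        using q_pos by (simp add: q_def sum_divide_distrib[symmetric])
    qed
    have "(\<lambda>k. 1 - exp (- (real m * q) * (pk k / q))) = (\<lambda>k. 1 - exp (- real m * pk k))"
      using q_pos by simp
    thus ?thesis using binomial_draws_dTV[OF q_pos q1 m] by (simp add: q_alt)
  qed
qed

lemma binomial_term_le_power:
  fixes p :: real assumes p: "0 \<le> p" "p \<le> 1"
  shows "real (n choose k) * (p ^ k * (1 - p) ^ (n - k)) \<le> (p * real n) ^ k"
proof (cases "k \<le> n")
  case True
  have "real (n choose k) \<le> real n ^ k" using binomial_le_pow[OF True] by (metis of_nat_le_iff of_nat_power)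
  moreover have "(1 - p) ^ (n - k) \<le> 1" using p by (intro power_le_one) auto
  ultimately have "real (n choose k) * (p ^ k * (1 - p) ^ (n - k)) \<le> real n ^ k * (p ^ k * 1)"
    using p by (intro mult_mono) auto
  thus ?thesis by (simp add: power_mult_distrib mult_ac)
next
  case False
  hence z: "n choose k = 0" by (simp add: binomial_eq_0 not_le)
  show ?thesis using p by (simp only: z) simp
qed

theorem mainTheorem8:
  fixes K :: nat and m :: "nat \<Rightarrow> nat" and p :: "nat \<Rightarrow> real"
  assumes K: "K \<ge> 2"
    and m_pos: "\<And>n. m n > 0"
    and p_prob: "\<And>n. 0 \<le> p n \<and> p n \<le> 1"
    and p_small: "(\<lambda>n. p n * real n) \<longlonglongrightarrow> 0"
  shows "(\<lambda>n.
     let pk = (\<lambda>k. p n ^ k * (1 - p n) ^ (n - k));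
         nk = (\<lambda>k. n choose k);
         Pk = (\<lambda>k. pk k / (\<Sum>j=2..K. pk j * real (nk j)));
         P'k = (\<lambda>k. 1 - exp (- real (m n) * pk k));
         M = binomial_pmf (m n) (\<Sum>k=2..K. real (nk k) * pk k)
     in dTV (coupon_X K nk Pk M) (binom_Y K nk P'k)) \<longlonglongrightarrow> 0"
proof -
  define u where "u n = (\<Sum>k=2..K. (p n * real n) ^ k)" for n
  have "u \<longlonglongrightarrow> (\<Sum>k=2..K. (0::real) ^ k)"
    unfolding u_def by (intro tendsto_sum tendsto_power p_small)
  moreover have "(\<Sum>k=2..K. (0::real) ^ k) = 0" by (rule sum.neutral) auto
  ultimately have u_lim: "u \<longlonglongrightarrow> 0" by simp
  show ?thesis
  proof (intro tendsto_sandwich[OF always_eventually always_eventually tendsto_const u_lim] allI, goal_cases)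
    case (1 n)
    show ?case by (simp add: Let_def dTV_nonneg)
  next
    case (2 n)
    have p: "0 \<le> p n" "p n \<le> 1" using p_prob[of n] by auto
    have "(\<Sum>k=2..K. real (n choose k) * (p n ^ k * (1 - p n) ^ (n - k))) \<le> u n"
      unfolding u_def by (intro sum_mono binomial_term_le_power p)
    with coupon_binomial_dTV_bound[OF m_pos[of n] p, of K n] show ?case by (simp add: Let_def)
  qed
qed

end
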